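(* For the $\mathrm{ECR}(\beta,\lambda)$ model with i.i.d. sample of size $n$, let $C(\beta)=\beta^3-7\beta^2+10\beta+72$. The Cox–Snell second-order bias terms of the maximum likelihood estimators are $$B_\beta=\frac1n\Bigg[\beta^3+13\beta^2+122\beta+380-\frac{699840}{19321(\beta+5)}+\frac{96000}{361(\beta+6)}+\frac{432(4085783\beta^2-8192586\beta-40352456)}{2641\,C(\beta)^2}-\frac{12(70740551\beta^2+3809213278\beta-35831044156)}{6974881\,C(\beta)}\Bigg],$$ $$B_\lambda=\frac\lambda n\Bigg[8\beta+86+\frac{49}{270\beta}-\frac{1679616}{96605(\beta+5)}+\frac{80000}{1083(\beta+6)}-\frac{8(84037561\beta^2+21509105\beta-393761162)}{7923\,C(\beta)^2}+\frac{356431397749\beta^2-158970444943\beta-4636191041858}{376643574\,C(\beta)}\Bigg].$$ (The bias-corrected estimators are $\tilde\beta=\hat\beta-B_\beta(\hat\beta,\hat\lambda)$, $\tilde\lambda=\hat\lambda-B_\lambda(\hat\beta,\hat\lambda)$.)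
   Context: The $\mathrm{ECR}(\beta,\lambda)$ distribution ($\beta,\lambda>0$) has density $f(x)=\beta\lambda\,\frac{x}{(\lambda^2+x^2)^{3/2}}\left(1-\frac{\lambda}{\sqrt{\lambda^2+x^2}}\right)^{\beta-1}$, $x>0$. For an i.i.d. sample of size $n$ with log-likelihood $\ell=\sum\log f(X_i)$ and $\theta=(\theta_1,\theta_2)=(\beta,\lambda)$, set $\kappa_{rs}=\mathbb E[\partial^2\ell/\partial\theta_r\partial\theta_s]$, $\kappa_{rst}=\mathbb E[\partial^3\ell/\partial\theta_r\partial\theta_s\partial\theta_t]$, $\kappa_{rs}^{(t)}=\partial\kappa_{rs}/\partial\theta_t$, and let $(\kappa^{rs})$ be the inverse of the $2\times2$ matrix $(\kappa_{rs})$. The Cox–Snell second-order bias term of the MLE of $\theta_i$ is $B_{\theta_i}=\sum_{r,s,t\in\{1,2\}}\kappa^{ir}\kappa^{st}\left(\kappa_{rs}^{(t)}-\tfrac12\kappa_{rst}\right)$ (so that $\mathbb E(\hat\theta_i)-\theta_i=B_{\theta_i}+O(n^{-2})$). *)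

theory Defs
  imports "HOL-Analysis.Analysis"
begin

definition ecr_pdf :: "real \<Rightarrow> real \<Rightarrow> real \<Rightarrow> real" where
  "ecr_pdf b l x = b * l * x / (l\<^sup>2 + x\<^sup>2) powr (3/2)
      * (1 - l / sqrt (l\<^sup>2 + x\<^sup>2)) powr (b - 1)"

definition ecr_logpdf :: "real \<Rightarrow> real \<Rightarrow> real \<Rightarrow> real" where
  "ecr_logpdf x b l = ln (ecr_pdf b l x)"

definition pd :: "nat \<Rightarrow> (real \<Rightarrow> real \<Rightarrow> real) \<Rightarrow> real \<Rightarrow> real \<Rightarrow> real" where
  "pd r g b l = (if r = 1 then deriv (\<lambda>b'. g b' l) b else deriv (\<lambda>l'. g b l') l)"

definition ecr_expect :: "real \<Rightarrow> real \<Rightarrow> (real \<Rightarrow> real) \<Rightarrow> real" where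
  "ecr_expect b l h = (LINT x:{0<..}|lborel. h x * ecr_pdf b l x)"

text \<open>For an i.i.d. sample of size n, the log-likelihood is the sum of n log-densities,
  so its expected derivatives are n times those of one observation.\<close>
definition kappa2 :: "nat \<Rightarrow> nat \<Rightarrow> nat \<Rightarrow> real \<Rightarrow> real \<Rightarrow> real" where
  "kappa2 n r s b l = real n * ecr_expect b l (\<lambda>x. pd r (pd s (ecr_logpdf x)) b l)"

definition kappa3 :: "nat \<Rightarrow> nat \<Rightarrow> nat \<Rightarrow> nat \<Rightarrow> real \<Rightarrow> real \<Rightarrow> real" where
  "kappa3 n r s t b l = real n * ecr_expect b l (\<lambda>x. pd r (pd s (pd t (ecr_logpdf x))) b l)"

definition kappa2_d :: "nat \<Rightarrow> nat \<Rightarrow> nat \<Rightarrow> nat \<Rightarrow> real \<Rightarrow> real \<Rightarrow> real" where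
  "kappa2_d n r s t b l = pd t (kappa2 n r s) b l"

definition kappa_inv :: "nat \<Rightarrow> nat \<Rightarrow> nat \<Rightarrow> real \<Rightarrow> real \<Rightarrow> real" where
  "kappa_inv n r s b l =
     (let d = kappa2 n 1 1 b l * kappa2 n 2 2 b l - kappa2 n 1 2 b l * kappa2 n 2 1 b l
      in (if r = 1 \<and> s = 1 then kappa2 n 2 2 b l
          else if r = 2 \<and> s = 2 then kappa2 n 1 1 b l
          else - kappa2 n r s b l) / d)"

definition cox_snell_bias :: "nat \<Rightarrow> nat \<Rightarrow> real \<Rightarrow> real \<Rightarrow> real" where
  "cox_snell_bias n i b l =
     (\<Sum>r\<in>{1,2}. \<Sum>s\<in>{1,2}. \<Sum>t\<in>{1,2::nat}.
        kappa_inv n i r b l * kappa_inv n s t b l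
        * (kappa2_d n r s t b l - kappa3 n r s t b l / 2))"

definition Cpoly :: "real \<Rightarrow> real" where
  "Cpoly b = b^3 - 7*b^2 + 10*b + 72"

end

theory Submission
  imports Defs "HOL-Real_Asymp.Real_Asymp"
begin

text \<open>Write \<open>W = \<lambda> / sqrt (\<lambda>\<^sup>2 + x\<^sup>2)\<close>. Under ECR(\<beta>, \<lambda>) the variable \<open>1 - W\<close> has
  distribution function \<open>u\<^sup>\<beta>\<close> on [0, 1], so \<open>E W\<^sup>k = k! / ((\<beta> + 1) \<cdots> (\<beta> + k))\<close>.
  Since \<open>\<partial>W/\<partial>\<lambda> = W (1 - W\<^sup>2) / \<lambda>\<close>, every derivative of the log-density up to order three is a
  polynomial in W with coefficients polynomial in \<beta>, divided by \<open>\<lambda>\<^sup>m\<close>, where m is the number of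
  differentiations in \<lambda>. Hence all cumulants are explicit rational functions of \<beta> times \<open>\<lambda>\<^sup>-\<^sup>m\<close>;
  as \<lambda> is a scale parameter these powers cancel in the Cox-Snell formula down to \<open>\<lambda>\<^sup>i\<^sup>-\<^sup>1\<close>, and
  the theorem becomes an identity between rational functions of \<beta>.\<close>

definition ecr_W :: "real \<Rightarrow> real \<Rightarrow> real" where
  "ecr_W l x = l / sqrt (l\<^sup>2 + x\<^sup>2)"

lemma ecr_W_pos: "l > 0 \<Longrightarrow> 0 < ecr_W l x"
  by (simp add: ecr_W_def add_pos_nonneg)

lemma ecr_W_less_one:
  assumes "l > 0" "x > 0"
  shows "ecr_W l x < 1"
proof -
  have "l < sqrt (l\<^sup>2 + x\<^sup>2)"
    using assms by (intro real_less_rsqrt) simp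
  then show ?thesis
    using assms by (simp add: ecr_W_def divide_less_eq_1 add_pos_pos)
qed

lemma ecr_pdf_eq_ecr_W:
  assumes "l > 0" "x > 0"
  shows "ecr_pdf b l x = b * l * x / sqrt (l\<^sup>2 + x\<^sup>2) ^ 3 * (1 - ecr_W l x) powr (b - 1)"
proof -
  have "(l\<^sup>2 + x\<^sup>2) powr (3/2) = (l\<^sup>2 + x\<^sup>2) powr (1/2 + 1/2 + 1/2)"
    by simp
  also have "\<dots> = ((l\<^sup>2 + x\<^sup>2) powr (1/2)) ^ 3"
    by (simp only: powr_add) (simp add: power3_eq_cube)
  finally have "(l\<^sup>2 + x\<^sup>2) powr (3/2) = ((l\<^sup>2 + x\<^sup>2) powr (1/2)) ^ 3" .
  then show ?thesis
    using assms by (simp add: ecr_pdf_def ecr_W_def powr_half_sqrt add_pos_pos)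
qed

lemma has_real_derivative_one_minus_ecr_W:
  assumes "l > 0"
  shows "((\<lambda>x. 1 - ecr_W l x) has_real_derivative l * x / sqrt (l\<^sup>2 + x\<^sup>2) ^ 3) (at x)"
proof -
  have "l\<^sup>2 + x\<^sup>2 > 0"
    using assms by (simp add: add_pos_nonneg)
  then show ?thesis
    unfolding ecr_W_def
    by (auto intro!: derivative_eq_intros simp: power2_eq_square power3_eq_cube field_simps)
qed

section \<open>Moments of W\<close>

definition ecr_W_moment :: "real \<Rightarrow> nat \<Rightarrow> real" where
  "ecr_W_moment b k = (\<Sum>j\<le>k. real (k choose j) * (-1)^j * b / (b + real j))"

lemma ecr_W_moment_Suc:
  assumes "b > 0"
  shows "ecr_W_moment b (Suc k) = ecr_W_moment b k - b / (b + 1) * ecr_W_moment (b + 1) k"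
proof -
  define g where "g j = (-1)^j * b / (b + real j)" for j
  have "ecr_W_moment b (Suc k) = g 0 + (\<Sum>i\<le>k. real (Suc k choose Suc i) * g (Suc i))"
    unfolding ecr_W_moment_def sum.atMost_Suc_shift g_def by (simp add: mult.assoc)
  also have "\<dots> = g 0 + (\<Sum>i\<le>k. real (k choose Suc i) * g (Suc i))
      + (\<Sum>i\<le>k. real (k choose i) * g (Suc i))"
    by (simp add: sum.distrib ring_distribs)
  also have "g 0 + (\<Sum>i\<le>k. real (k choose Suc i) * g (Suc i)) = (\<Sum>j\<le>Suc k. real (k choose j) * g j)"
    by (simp only: sum.atMost_Suc_shift) simp
  also have "\<dots> = ecr_W_moment b k"
    by (simp add: ecr_W_moment_def g_def mult.assoc)
  also have "(\<Sum>i\<le>k. real (k choose i) * g (Suc i)) = - b / (b + 1) * ecr_W_moment (b + 1) k"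
    unfolding ecr_W_moment_def sum_distrib_left g_def
    by (rule sum.cong) (use assms in \<open>simp_all add: ac_simps\<close>)
  finally show ?thesis by simp
qed

lemma ecr_W_moment_eq:
  assumes "b > 0"
  shows "ecr_W_moment b k = fact k / pochhammer (b + 1) k"
  using assms
proof (induction k arbitrary: b)
  case 0
  then show ?case by (simp add: ecr_W_moment_def)
next
  case (Suc k)
  define p where "p = pochhammer (b + 1) k"
  define q where "q = pochhammer (b + 1 + 1) k"
  define s where "s = b + 1 + real k"
  have pos: "p > 0" "s > 0"
    using Suc.prems by (simp_all add: p_def s_def pochhammer_pos)
  have rec: "pochhammer (b + 1) (Suc k) = (b + 1) * q" "pochhammer (b + 1) (Suc k) = p * s"
    unfolding p_def q_def s_def by (rule pochhammer_rec, rule pochhammer_Suc)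
  then have "q = p * s / (b + 1)"
    using Suc.prems by (simp add: field_simps)
  then have "fact k / p - b / (b + 1) * (fact k / q) = fact (Suc k) / (p * s)"
    using pos Suc.prems by (simp add: field_simps) (simp add: s_def algebra_simps)
  then show ?case
    using Suc.IH[of b] Suc.IH[of "b + 1"] Suc.prems rec(2)
    by (simp add: ecr_W_moment_Suc p_def q_def)
qed

text \<open>A primitive of \<open>W\<^sup>k f\<close> vanishing at 0: after expanding \<open>W\<^sup>k = (1 - (1 - W))\<^sup>k\<close>
  binomially, each term integrates to a power of \<open>1 - W\<close>.\<close>

definition ecr_W_partial_moment :: "real \<Rightarrow> real \<Rightarrow> nat \<Rightarrow> real \<Rightarrow> real" where
  "ecr_W_partial_moment b l k x =
     (\<Sum>j\<le>k. real (k choose j) * (-1)^j * b / (b + real j) * (1 - ecr_W l x) powr (b + real j))"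

lemma has_real_derivative_ecr_W_partial_moment:
  assumes "b > 0" "l > 0" "x > 0"
  shows "(ecr_W_partial_moment b l k has_real_derivative ecr_W l x ^ k * ecr_pdf b l x) (at x)"
proof -
  define u where "u = 1 - ecr_W l x"
  define u' where "u' = l * x / sqrt (l\<^sup>2 + x\<^sup>2) ^ 3"
  have u: "0 < u" "u < 1"
    using ecr_W_pos[OF assms(2)] ecr_W_less_one[OF assms(2,3)] by (auto simp: u_def)
  have "((\<lambda>x. (1 - ecr_W l x) powr (b + real j)) has_real_derivative
      (b + real j) * u powr (b + real j - 1) * u') (at x)" for j
    using DERIV_fun_powr[OF has_real_derivative_one_minus_ecr_W[OF assms(2)], of x "b + real j"] u
    by (simp add: u_def u'_def)
  then have "(ecr_W_partial_moment b l k has_real_derivative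
      (\<Sum>j\<le>k. real (k choose j) * (-1)^j * b / (b + real j) * ((b + real j) * u powr (b + real j - 1) * u'))) (at x)"
    unfolding ecr_W_partial_moment_def by (intro DERIV_sum DERIV_cmult)
  also have "(\<Sum>j\<le>k. real (k choose j) * (-1)^j * b / (b + real j) * ((b + real j) * u powr (b + real j - 1) * u'))
      = b * u' * u powr (b - 1) * (\<Sum>j\<le>k. real (k choose j) * (- u)^j * 1^(k - j))"
    unfolding sum_distrib_left
  proof (rule sum.cong)
    fix j assume "j \<in> {..k}"
    have "u powr (b + real j - 1) = u powr (b - 1) * u ^ j"
      using u by (simp add: powr_add[symmetric] powr_realpow[symmetric] algebra_simps)
    then show "real (k choose j) * (-1)^j * b / (b + real j) * ((b + real j) * u powr (b + real j - 1) * u')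
        = b * u' * u powr (b - 1) * (real (k choose j) * (- u)^j * 1^(k - j))"
      using assms(1) by (simp add: power_minus[of u] field_simps)
  qed simp
  also have "\<dots> = ecr_W l x ^ k * ecr_pdf b l x"
    unfolding binomial_ring[symmetric]
    using assms by (simp add: ecr_pdf_eq_ecr_W u_def u'_def)
  finally show ?thesis .
qed

lemma ecr_W_partial_moment_at_right_0:
  assumes "b > 0" "l > 0"
  shows "(ecr_W_partial_moment b l k \<longlongrightarrow> 0) (at_right 0)"
proof -
  have lim: "((\<lambda>x. 1 - ecr_W l x) \<longlongrightarrow> 0) (at_right 0)"
  proof -
    have "isCont (\<lambda>x. 1 - ecr_W l x) 0"
      unfolding ecr_W_def using assms by (auto intro!: continuous_intros)
    then show ?thesis
      using assms by (simp add: isCont_def ecr_W_def filterlim_at_split)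
  qed
  have nonneg: "\<forall>\<^sub>F x in at_right 0. 0 \<le> 1 - ecr_W l x"
    unfolding eventually_at_right_field
    using ecr_W_less_one[OF assms(2)] by (intro exI[of _ 1]) (auto intro: less_imp_le)
  have "(ecr_W_partial_moment b l k \<longlongrightarrow>
      (\<Sum>j\<le>k. real (k choose j) * (-1)^j * b / (b + real j) * 0)) (at_right 0)"
    unfolding ecr_W_partial_moment_def using assms
    by (intro tendsto_sum tendsto_mult tendsto_const tendsto_zero_powrI[OF lim tendsto_const nonneg])
      (auto simp: add_pos_nonneg)
  then show ?thesis by simp
qed

lemma ecr_W_partial_moment_at_top:
  assumes "b > 0" "l > 0"
  shows "(ecr_W_partial_moment b l k \<longlongrightarrow> ecr_W_moment b k) at_top"
proof -
  have "((\<lambda>x. 1 - ecr_W l x) \<longlongrightarrow> 1) at_top"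
    unfolding ecr_W_def using assms by real_asymp
  then have "(ecr_W_partial_moment b l k \<longlongrightarrow>
      (\<Sum>j\<le>k. real (k choose j) * (-1)^j * b / (b + real j) * 1 powr (b + real j))) at_top"
    unfolding ecr_W_partial_moment_def
    by (intro tendsto_sum tendsto_mult tendsto_const tendsto_powr) auto
  then show ?thesis by (simp add: ecr_W_moment_def)
qed

lemma ecr_W_power_integral:
  assumes "b > 0" "l > 0"
  shows "set_integrable lborel {0<..} (\<lambda>x. ecr_W l x ^ k * ecr_pdf b l x)"
    and "(LINT x:{0<..}|lborel. ecr_W l x ^ k * ecr_pdf b l x) = fact k / pochhammer (b + 1) k"
proof -
  have cont: "isCont (\<lambda>x. ecr_W l x ^ k * ecr_pdf b l x) x" if "x > 0" for x
    using assms that ecr_W_less_one[OF assms(2) that] unfolding ecr_W_def ecr_pdf_def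
    by (intro continuous_intros) (auto simp: add_pos_pos)
  have nonneg: "AE x in lborel. 0 < ereal x \<longrightarrow> ereal x < \<infinity> \<longrightarrow> 0 \<le> ecr_W l x ^ k * ecr_pdf b l x"
    using assms ecr_W_pos[OF assms(2)]
    by (intro AE_I2 impI mult_nonneg_nonneg zero_le_power) (auto simp: ecr_pdf_def less_imp_le)
  note FTC = interval_integral_FTC_nonneg[where a = 0 and b = \<infinity> and F = "ecr_W_partial_moment b l k"
      and f = "\<lambda>x. ecr_W l x ^ k * ecr_pdf b l x" and A = 0 and B = "ecr_W_moment b k"]
  have "((ecr_W_partial_moment b l k \<circ> real_of_ereal) \<longlongrightarrow> 0) (at_right 0)"
    using ecr_W_partial_moment_at_right_0[OF assms] by (simp add: zero_ereal_def ereal_tendsto_simps)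
  moreover have "((ecr_W_partial_moment b l k \<circ> real_of_ereal) \<longlongrightarrow> ecr_W_moment b k) (at_left \<infinity>)"
    using ecr_W_partial_moment_at_top[OF assms] by (simp add: ereal_tendsto_simps)
  ultimately have "set_integrable lborel (einterval 0 \<infinity>) (\<lambda>x. ecr_W l x ^ k * ecr_pdf b l x)"
    "(LBINT x=0..\<infinity>. ecr_W l x ^ k * ecr_pdf b l x) = ecr_W_moment b k - 0"
    using FTC[OF _ _ _ nonneg] has_real_derivative_ecr_W_partial_moment[OF assms] cont
    by (auto simp: zero_ereal_def)
  moreover have "einterval 0 \<infinity> = {0::real<..}"
    by (simp add: zero_ereal_def)
  ultimately show "set_integrable lborel {0<..} (\<lambda>x. ecr_W l x ^ k * ecr_pdf b l x)"
    "(LINT x:{0<..}|lborel. ecr_W l x ^ k * ecr_pdf b l x) = fact k / pochhammer (b + 1) k"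
    using assms by (simp_all add: interval_lebesgue_integral_def zero_ereal_def ecr_W_moment_eq)
qed

lemma ecr_expect_W_polynomial:
  assumes "b > 0" "l > 0" "finite I" "\<And>x. x > 0 \<Longrightarrow> h x = (\<Sum>i\<in>I. c i * ecr_W l x ^ i)"
  shows "ecr_expect b l h = (\<Sum>i\<in>I. c i * fact i / pochhammer (b + 1) i)"
proof -
  have "ecr_expect b l h = (LINT x:{0<..}|lborel. (\<Sum>i\<in>I. c i * (ecr_W l x ^ i * ecr_pdf b l x)))"
    unfolding ecr_expect_def
    by (rule set_lebesgue_integral_cong) (auto simp: assms(4) sum_distrib_right mult.assoc)
  also have "\<dots> = (\<Sum>i\<in>I. LINT x:{0<..}|lborel. c i * (ecr_W l x ^ i * ecr_pdf b l x))"
    unfolding set_lebesgue_integral_def scaleR_sum_right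
    using set_integrable_mult_right[OF ecr_W_power_integral(1)[OF assms(1,2)]]
    by (simp add: set_integrable_def)
  also have "\<dots> = (\<Sum>i\<in>I. c i * fact i / pochhammer (b + 1) i)"
    using ecr_W_power_integral(2)[OF assms(1,2)] by simp
  finally show ?thesis .
qed

section \<open>Derivatives of the log-density\<close>

lemma ecr_logpdf_eq_ecr_W:
  assumes "x > 0" "b > 0" "l > 0"
  shows "ecr_logpdf x b l = ln b + ln x - 2 * ln l + 3 * ln (ecr_W l x) + (b - 1) * ln (1 - ecr_W l x)"
proof -
  have W: "0 < ecr_W l x" "0 < 1 - ecr_W l x"
    using ecr_W_pos[OF assms(3)] ecr_W_less_one[OF assms(3,1)] by auto
  have "sqrt (l\<^sup>2 + x\<^sup>2) = l / ecr_W l x"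
    using assms by (simp add: ecr_W_def add_pos_pos)
  then have "ecr_pdf b l x = b * x * ecr_W l x ^ 3 / l\<^sup>2 * (1 - ecr_W l x) powr (b - 1)"
    using assms W by (simp add: ecr_pdf_eq_ecr_W power_divide power2_eq_square power3_eq_cube)
  then show ?thesis
    using assms W by (simp add: ecr_logpdf_def ln_mult ln_div ln_powr ln_realpow)
qed

lemma has_real_derivative_ecr_W_lambda:
  assumes "l > 0"
  shows "((\<lambda>l. ecr_W l x) has_real_derivative ecr_W l x * (1 - (ecr_W l x)\<^sup>2) / l) (at l within S)"
proof -
  define r where "r = sqrt (l\<^sup>2 + x\<^sup>2)"
  have q: "l\<^sup>2 + x\<^sup>2 > 0"
    using assms by (simp add: add_pos_nonneg)
  then have r: "r > 0"
    by (simp add: r_def)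
  have "((\<lambda>l. l\<^sup>2 + x\<^sup>2) has_real_derivative 2 * l) (at l within S)"
    by (auto intro!: derivative_eq_intros)
  from DERIV_chain2[OF DERIV_real_sqrt[OF q] this]
  have sqrt_deriv: "((\<lambda>l. sqrt (l\<^sup>2 + x\<^sup>2)) has_real_derivative inverse r / 2 * (2 * l)) (at l within S)"
    by (simp only: r_def)
  have "((\<lambda>l. l / sqrt (l\<^sup>2 + x\<^sup>2)) has_real_derivative
      (1 * r - l * (inverse r / 2 * (2 * l))) / (r * r)) (at l within S)"
    unfolding r_def by (rule DERIV_divide[OF DERIV_ident sqrt_deriv[unfolded r_def]]) (use assms in simp)
  moreover have "(1 * r - l * (inverse r / 2 * (2 * l))) / (r * r) = l / r * (1 - (l / r)\<^sup>2) / l"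
    using r assms by (simp add: field_simps power2_eq_square)
  ultimately show ?thesis
    by (simp add: ecr_W_def r_def)
qed

lemma has_real_derivative_ln_ecr_W_lambda:
  assumes "l > 0"
  shows "((\<lambda>l. ln (ecr_W l x)) has_real_derivative (1 - ecr_W l x ^ 2) / l) (at l)"
proof -
  have "ecr_W l x \<noteq> 0"
    using ecr_W_pos[OF assms, of x] by linarith
  then show ?thesis
    using assms ecr_W_pos[OF assms]
    by (auto intro!: derivative_eq_intros has_real_derivative_ecr_W_lambda)
qed

lemma has_real_derivative_ln_one_minus_ecr_W_lambda:
  assumes "l > 0" "x > 0"
  shows "((\<lambda>l. ln (1 - ecr_W l x)) has_real_derivative - (ecr_W l x + ecr_W l x ^ 2) / l) (at l)"
proof -
  have "1 - ecr_W l x > 0"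
    using ecr_W_less_one[OF assms] by simp
  then show ?thesis
    using assms
    by (auto intro!: derivative_eq_intros has_real_derivative_ecr_W_lambda
        simp: field_simps power2_eq_square)
qed

lemma has_real_derivative_divide_power:
  fixes f :: "real \<Rightarrow> real"
  assumes "(f has_real_derivative f') (at l)" "l \<noteq> 0"
  shows "((\<lambda>l. f l / l ^ k) has_real_derivative (l * f' - real k * f l) / l ^ Suc k) (at l)"
proof -
  have "((\<lambda>l. f l / l ^ k) has_real_derivative (f' * l ^ k - f l * (real k * l ^ (k - 1))) / (l ^ k * l ^ k)) (at l)"
    using assms by (intro DERIV_divide DERIV_pow) simp_all
  moreover have "(f' * l ^ k - f l * (real k * l ^ (k - 1))) / (l ^ k * l ^ k) = (l * f' - real k * f l) / l ^ Suc k"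
    using assms(2) by (cases k) (simp_all add: field_simps)
  ultimately show ?thesis
    by simp
qed

lemma has_real_derivative_ecr_W_fun_div_power:
  assumes "l > 0" "(q has_real_derivative q') (at (ecr_W l x))"
  shows "((\<lambda>l. q (ecr_W l x) / l ^ k) has_real_derivative
      (ecr_W l x * (1 - ecr_W l x ^ 2) * q' - real k * q (ecr_W l x)) / l ^ Suc k) (at l)"
proof -
  have D: "((\<lambda>l. q (ecr_W l x)) has_real_derivative q' * (ecr_W l x * (1 - ecr_W l x ^ 2) / l)) (at l)"
    using DERIV_chain2[where f = q and g = "\<lambda>l. ecr_W l x" and x = l,
        OF assms(2) has_real_derivative_ecr_W_lambda[OF assms(1)]]
    by simp
  have "l \<noteq> 0"
    using assms(1) by simp
  show ?thesis
    by (rule DERIV_cong[OF has_real_derivative_divide_power[OF D \<open>l \<noteq> 0\<close>]]) (use assms(1) in simp)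
qed

lemma pd_1_eqI:
  assumes "b > 0" "\<And>b'. b' > 0 \<Longrightarrow> g b' l = G b'" "(G has_real_derivative D) (at b)"
  shows "pd 1 g b l = D"
proof -
  have "\<forall>\<^sub>F b' in nhds b. g b' l = G b'"
    using eventually_nhds_in_open[of "{0<..}" b] assms(1) by (auto elim!: eventually_mono intro: assms(2))
  then have "deriv (\<lambda>b'. g b' l) b = deriv G b"
    by (rule deriv_cong_ev) simp
  then show ?thesis
    using DERIV_imp_deriv[OF assms(3)] by (simp add: pd_def)
qed

lemma pd_2_eqI:
  assumes "l > 0" "\<And>l'. l' > 0 \<Longrightarrow> g b l' = G l'" "(G has_real_derivative D) (at l)"
  shows "pd 2 g b l = D"
proof -
  have "\<forall>\<^sub>F l' in nhds l. g b l' = G l'"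
    using eventually_nhds_in_open[of "{0<..}" l] assms(1) by (auto elim!: eventually_mono intro: assms(2))
  then have "deriv (\<lambda>l'. g b l') l = deriv G l"
    by (rule deriv_cong_ev) simp
  then show ?thesis
    using DERIV_imp_deriv[OF assms(3)] by (simp add: pd_def)
qed

lemma pd_ecr_logpdf:
  assumes "x > 0" "b > 0" "l > 0"
  shows "pd 1 (ecr_logpdf x) b l = 1 / b + ln (1 - ecr_W l x)"
    and "pd 2 (ecr_logpdf x) b l = (1 - 3 * ecr_W l x ^ 2 - (b - 1) * (ecr_W l x + ecr_W l x ^ 2)) / l"
proof -
  have W: "0 < ecr_W l x" "ecr_W l x < 1"
    using ecr_W_pos[OF assms(3)] ecr_W_less_one[OF assms(3,1)] by auto
  show "pd 1 (ecr_logpdf x) b l = 1 / b + ln (1 - ecr_W l x)"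
    by (rule pd_1_eqI[OF assms(2),
          where G = "\<lambda>b. ln b + ln x - 2 * ln l + 3 * ln (ecr_W l x) + (b - 1) * ln (1 - ecr_W l x)"])
      (use assms W in \<open>auto simp: ecr_logpdf_eq_ecr_W intro!: derivative_eq_intros\<close>)
  have "((\<lambda>l. ln b + ln x - 2 * ln l + 3 * ln (ecr_W l x) + (b - 1) * ln (1 - ecr_W l x))
      has_real_derivative 0 + 0 - 2 * inverse l + 3 * ((1 - ecr_W l x ^ 2) / l)
        + (b - 1) * (- (ecr_W l x + ecr_W l x ^ 2) / l)) (at l)"
    using assms
    by (intro DERIV_add DERIV_diff DERIV_cmult DERIV_const DERIV_ln
        has_real_derivative_ln_ecr_W_lambda has_real_derivative_ln_one_minus_ecr_W_lambda)
  moreover have "0 + 0 - 2 * inverse l + 3 * ((1 - ecr_W l x ^ 2) / l)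
        + (b - 1) * (- (ecr_W l x + ecr_W l x ^ 2) / l)
      = (1 - 3 * ecr_W l x ^ 2 - (b - 1) * (ecr_W l x + ecr_W l x ^ 2)) / l"
    using assms by (simp add: field_simps)
  ultimately show "pd 2 (ecr_logpdf x) b l = (1 - 3 * ecr_W l x ^ 2 - (b - 1) * (ecr_W l x + ecr_W l x ^ 2)) / l"
    using assms by (intro pd_2_eqI[OF assms(3)]) (simp_all add: ecr_logpdf_eq_ecr_W)
qed

lemma pd_pd_ecr_logpdf:
  assumes "x > 0" "b > 0" "l > 0"
  shows "pd 1 (pd 1 (ecr_logpdf x)) b l = - 1 / b\<^sup>2"
    and "pd 2 (pd 1 (ecr_logpdf x)) b l = - (ecr_W l x + ecr_W l x ^ 2) / l"
    and "pd 1 (pd 2 (ecr_logpdf x)) b l = - (ecr_W l x + ecr_W l x ^ 2) / l"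
    and "pd 2 (pd 2 (ecr_logpdf x)) b l =
      (- 1 - (b + 2) * ecr_W l x ^ 2 + (b - 1) * ecr_W l x ^ 3 + (2 * b + 4) * ecr_W l x ^ 4) / l\<^sup>2"
proof -
  note score_beta = pd_ecr_logpdf(1)[OF assms(1) _ assms(3)]
  note score_lambda = pd_ecr_logpdf(2)[OF assms(1) _ assms(3)]
  show "pd 1 (pd 1 (ecr_logpdf x)) b l = - 1 / b\<^sup>2"
  proof (rule pd_1_eqI[OF assms(2)])
    show "\<And>b'. b' > 0 \<Longrightarrow> pd 1 (ecr_logpdf x) b' l = 1 / b' + ln (1 - ecr_W l x)"
      by (rule score_beta)
    show "((\<lambda>b. 1 / b + ln (1 - ecr_W l x)) has_real_derivative - 1 / b\<^sup>2) (at b)"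
      using assms by (auto intro!: derivative_eq_intros simp: power2_eq_square)
  qed
  show "pd 2 (pd 1 (ecr_logpdf x)) b l = - (ecr_W l x + ecr_W l x ^ 2) / l"
  proof (rule pd_2_eqI[OF assms(3)])
    show "\<And>l'. l' > 0 \<Longrightarrow> pd 1 (ecr_logpdf x) b l' = 1 / b + ln (1 - ecr_W l' x)"
      by (rule pd_ecr_logpdf(1)[OF assms(1,2)])
    show "((\<lambda>l. 1 / b + ln (1 - ecr_W l x)) has_real_derivative - (ecr_W l x + ecr_W l x ^ 2) / l) (at l)"
      using DERIV_add[OF DERIV_const has_real_derivative_ln_one_minus_ecr_W_lambda[OF assms(3,1)]]
      by simp
  qed
  show "pd 1 (pd 2 (ecr_logpdf x)) b l = - (ecr_W l x + ecr_W l x ^ 2) / l"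
  proof (rule pd_1_eqI[OF assms(2)])
    show "\<And>b'. b' > 0 \<Longrightarrow> pd 2 (ecr_logpdf x) b' l
        = (1 - 3 * ecr_W l x ^ 2 - (b' - 1) * (ecr_W l x + ecr_W l x ^ 2)) / l"
      by (rule score_lambda)
    show "((\<lambda>b. (1 - 3 * ecr_W l x ^ 2 - (b - 1) * (ecr_W l x + ecr_W l x ^ 2)) / l)
        has_real_derivative - (ecr_W l x + ecr_W l x ^ 2) / l) (at b)"
      using assms by (auto intro!: derivative_eq_intros)
  qed
  show "pd 2 (pd 2 (ecr_logpdf x)) b l =
      (- 1 - (b + 2) * ecr_W l x ^ 2 + (b - 1) * ecr_W l x ^ 3 + (2 * b + 4) * ecr_W l x ^ 4) / l\<^sup>2"
  proof (rule pd_2_eqI[OF assms(3)])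
    let ?q = "\<lambda>w. 1 - 3 * w ^ 2 - (b - 1) * (w + w ^ 2)"
    show "\<And>l'. l' > 0 \<Longrightarrow> pd 2 (ecr_logpdf x) b l' = ?q (ecr_W l' x) / l'"
      by (rule pd_ecr_logpdf(2)[OF assms(1,2)])
    have "(?q has_real_derivative - 6 * ecr_W l x - (b - 1) * (1 + 2 * ecr_W l x)) (at (ecr_W l x))"
      by (auto intro!: derivative_eq_intros)
    from has_real_derivative_ecr_W_fun_div_power[OF assms(3) this, of 1]
    show "((\<lambda>l. ?q (ecr_W l x) / l) has_real_derivative
      (- 1 - (b + 2) * ecr_W l x ^ 2 + (b - 1) * ecr_W l x ^ 3 + (2 * b + 4) * ecr_W l x ^ 4) / l\<^sup>2) (at l)"
      by (simp add: algebra_simps power2_eq_square power3_eq_cube power4_eq_xxxx)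
  qed
qed

lemma pd_pd_pd_ecr_logpdf:
  assumes "x > 0" "b > 0" "l > 0"
  shows "pd 1 (pd 1 (pd 1 (ecr_logpdf x))) b l = 2 / b ^ 3"
    and "pd 1 (pd 1 (pd 2 (ecr_logpdf x))) b l = 0"
    and "pd 1 (pd 2 (pd 1 (ecr_logpdf x))) b l = 0"
    and "pd 2 (pd 1 (pd 1 (ecr_logpdf x))) b l = 0"
    and "pd 1 (pd 2 (pd 2 (ecr_logpdf x))) b l = (ecr_W l x ^ 3 + 2 * ecr_W l x ^ 4 - ecr_W l x ^ 2) / l\<^sup>2"
    and "pd 2 (pd 1 (pd 2 (ecr_logpdf x))) b l = (ecr_W l x ^ 3 + 2 * ecr_W l x ^ 4 - ecr_W l x ^ 2) / l\<^sup>2"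
    and "pd 2 (pd 2 (pd 1 (ecr_logpdf x))) b l = (ecr_W l x ^ 3 + 2 * ecr_W l x ^ 4 - ecr_W l x ^ 2) / l\<^sup>2"
    and "pd 2 (pd 2 (pd 2 (ecr_logpdf x))) b l = (2 + (b - 1) * ecr_W l x ^ 3 + (6 * b + 12) * ecr_W l x ^ 4
      + (3 - 3 * b) * ecr_W l x ^ 5 - (8 * b + 16) * ecr_W l x ^ 6) / l ^ 3"
proof -
  note hess = pd_pd_ecr_logpdf[OF assms(1) _ assms(3)] pd_pd_ecr_logpdf[OF assms(1,2)]
  have mixed_lambda: "((\<lambda>l. - (ecr_W l x + ecr_W l x ^ 2) / l) has_real_derivative
      (ecr_W l x ^ 3 + 2 * ecr_W l x ^ 4 - ecr_W l x ^ 2) / l\<^sup>2) (at l)"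
  proof -
    have "((\<lambda>w. - (w + w ^ 2)) has_real_derivative - (1 + 2 * ecr_W l x)) (at (ecr_W l x))"
      by (auto intro!: derivative_eq_intros)
    from has_real_derivative_ecr_W_fun_div_power[OF assms(3) this, of 1]
    show ?thesis
      by (simp add: algebra_simps power2_eq_square power3_eq_cube power4_eq_xxxx)
  qed
  show "pd 1 (pd 1 (pd 1 (ecr_logpdf x))) b l = 2 / b ^ 3"
  proof (rule pd_1_eqI[OF assms(2)])
    show "\<And>b'. b' > 0 \<Longrightarrow> pd 1 (pd 1 (ecr_logpdf x)) b' l = - 1 / b'\<^sup>2"
      by (rule hess(1))
    show "((\<lambda>b. - 1 / b\<^sup>2) has_real_derivative 2 / b ^ 3) (at b)"
      using assms by (auto intro!: derivative_eq_intros simp: field_simps power2_eq_square power3_eq_cube)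
  qed
  show "pd 1 (pd 1 (pd 2 (ecr_logpdf x))) b l = 0"
  proof (rule pd_1_eqI[OF assms(2)])
    show "\<And>b'. b' > 0 \<Longrightarrow> pd 1 (pd 2 (ecr_logpdf x)) b' l = - (ecr_W l x + ecr_W l x ^ 2) / l"
      by (rule hess(3))
  qed (rule DERIV_const)
  show "pd 1 (pd 2 (pd 1 (ecr_logpdf x))) b l = 0"
  proof (rule pd_1_eqI[OF assms(2)])
    show "\<And>b'. b' > 0 \<Longrightarrow> pd 2 (pd 1 (ecr_logpdf x)) b' l = - (ecr_W l x + ecr_W l x ^ 2) / l"
      by (rule hess(2))
  qed (rule DERIV_const)
  show "pd 2 (pd 1 (pd 1 (ecr_logpdf x))) b l = 0"
  proof (rule pd_2_eqI[OF assms(3)])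
    show "\<And>l'. l' > 0 \<Longrightarrow> pd 1 (pd 1 (ecr_logpdf x)) b l' = - 1 / b\<^sup>2"
      by (rule hess(5))
  qed (rule DERIV_const)
  show "pd 1 (pd 2 (pd 2 (ecr_logpdf x))) b l = (ecr_W l x ^ 3 + 2 * ecr_W l x ^ 4 - ecr_W l x ^ 2) / l\<^sup>2"
  proof (rule pd_1_eqI[OF assms(2)])
    show "\<And>b'. b' > 0 \<Longrightarrow> pd 2 (pd 2 (ecr_logpdf x)) b' l = (- 1 - (b' + 2) * ecr_W l x ^ 2
        + (b' - 1) * ecr_W l x ^ 3 + (2 * b' + 4) * ecr_W l x ^ 4) / l\<^sup>2"
      by (rule hess(4))
    show "((\<lambda>b. (- 1 - (b + 2) * ecr_W l x ^ 2 + (b - 1) * ecr_W l x ^ 3 + (2 * b + 4) * ecr_W l x ^ 4) / l\<^sup>2)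
        has_real_derivative (ecr_W l x ^ 3 + 2 * ecr_W l x ^ 4 - ecr_W l x ^ 2) / l\<^sup>2) (at b)"
      using assms by (auto intro!: derivative_eq_intros simp: field_simps)
  qed
  show "pd 2 (pd 1 (pd 2 (ecr_logpdf x))) b l = (ecr_W l x ^ 3 + 2 * ecr_W l x ^ 4 - ecr_W l x ^ 2) / l\<^sup>2"
    by (rule pd_2_eqI[OF assms(3) _ mixed_lambda]) (rule hess(7))
  show "pd 2 (pd 2 (pd 1 (ecr_logpdf x))) b l = (ecr_W l x ^ 3 + 2 * ecr_W l x ^ 4 - ecr_W l x ^ 2) / l\<^sup>2"
    by (rule pd_2_eqI[OF assms(3) _ mixed_lambda]) (rule hess(6))
  show "pd 2 (pd 2 (pd 2 (ecr_logpdf x))) b l = (2 + (b - 1) * ecr_W l x ^ 3 + (6 * b + 12) * ecr_W l x ^ 4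
      + (3 - 3 * b) * ecr_W l x ^ 5 - (8 * b + 16) * ecr_W l x ^ 6) / l ^ 3"
  proof (rule pd_2_eqI[OF assms(3)])
    let ?q = "\<lambda>w. - 1 - (b + 2) * w ^ 2 + (b - 1) * w ^ 3 + (2 * b + 4) * w ^ 4"
    show "\<And>l'. l' > 0 \<Longrightarrow> pd 2 (pd 2 (ecr_logpdf x)) b l' = ?q (ecr_W l' x) / l'\<^sup>2"
      by (rule hess(8))
    have "(?q has_real_derivative - 2 * (b + 2) * ecr_W l x + 3 * (b - 1) * ecr_W l x ^ 2
        + 4 * (2 * b + 4) * ecr_W l x ^ 3) (at (ecr_W l x))"
      by (auto intro!: derivative_eq_intros simp: algebra_simps)
    from has_real_derivative_ecr_W_fun_div_power[OF assms(3) this, of 2]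
    show "((\<lambda>l. ?q (ecr_W l x) / l\<^sup>2) has_real_derivative (2 + (b - 1) * ecr_W l x ^ 3
        + (6 * b + 12) * ecr_W l x ^ 4 + (3 - 3 * b) * ecr_W l x ^ 5 - (8 * b + 16) * ecr_W l x ^ 6) / l ^ 3) (at l)"
      by (simp add: algebra_simps eval_nat_numeral)
  qed
qed

section \<open>Cumulants\<close>

text \<open>Cumulants of one observation at \<open>\<lambda> = 1\<close>, indexed by the number m of indices equal to 2
  (differentiations in \<lambda>); the general ones are obtained by dividing by \<open>\<lambda>\<^sup>m\<close>.\<close>

definition ecr_kappa2 :: "real \<Rightarrow> nat \<Rightarrow> real" where
  "ecr_kappa2 b m =
     (if m = 0 then - 1 / b\<^sup>2
      else if m = 1 then - (b + 4) / ((b + 1) * (b + 2))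
      else - b * (b\<^sup>2 + 11 * b + 36) / ((b + 2) * (b + 3) * (b + 4)))"

definition ecr_kappa3 :: "real \<Rightarrow> nat \<Rightarrow> real" where
  "ecr_kappa3 b m =
     (if m = 0 then 2 / b ^ 3
      else if m = 1 then 0
      else if m = 2 then (48 - 8 * b - 2 * b\<^sup>2) / ((b + 1) * (b + 2) * (b + 3) * (b + 4))
      else 2 * b * (b ^ 4 + 20 * b ^ 3 + 158 * b\<^sup>2 + 691 * b + 1866)
        / ((b + 2) * (b + 3) * (b + 4) * (b + 5) * (b + 6)))"

lemma kappa2_eq_ecr_kappa2:
  assumes "b > 0" "l > 0" "r \<in> {1, 2}" "s \<in> {1, 2}"
  shows "kappa2 n r s b l = real n * ecr_kappa2 b (r + s - 2) / l ^ (r + s - 2)"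
proof -
  note hess = pd_pd_ecr_logpdf[OF _ assms(1,2)]
  note expect = ecr_expect_W_polynomial[OF assms(1,2)]
  \<comment> \<open>\<open>One_nat_def\<close> would rewrite \<open>pd 1\<close> to \<open>pd (Suc 0)\<close>, out of reach of \<open>hess\<close>.\<close>
  have "ecr_expect b l (\<lambda>x. pd 1 (pd 1 (ecr_logpdf x)) b l)
      = (\<Sum>i\<in>{0}. - 1 / b\<^sup>2 * fact i / pochhammer (b + 1) i)"
    by (rule expect) (simp_all add: hess del: One_nat_def)
  then have E11: "ecr_expect b l (\<lambda>x. pd 1 (pd 1 (ecr_logpdf x)) b l) = ecr_kappa2 b 0"
    by (simp add: ecr_kappa2_def)
  have mixed: "(\<Sum>i\<in>{1, 2}. - 1 / l * fact i / pochhammer (b + 1) i) = ecr_kappa2 b 1 / l"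
    using assms(1,2) by (simp add: ecr_kappa2_def eval_nat_numeral pochhammer_Suc divide_simps) (simp add: algebra_simps)
  have "ecr_expect b l (\<lambda>x. pd 1 (pd 2 (ecr_logpdf x)) b l)
      = (\<Sum>i\<in>{1, 2}. - 1 / l * fact i / pochhammer (b + 1) i)"
    by (rule expect) (use assms(2) in \<open>simp_all add: hess field_simps del: One_nat_def\<close>)
  then have E12: "ecr_expect b l (\<lambda>x. pd 1 (pd 2 (ecr_logpdf x)) b l) = ecr_kappa2 b 1 / l"
    by (simp only: mixed)
  have "ecr_expect b l (\<lambda>x. pd 2 (pd 1 (ecr_logpdf x)) b l)
      = (\<Sum>i\<in>{1, 2}. - 1 / l * fact i / pochhammer (b + 1) i)"
    by (rule expect) (use assms(2) in \<open>simp_all add: hess field_simps del: One_nat_def\<close>)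
  then have E21: "ecr_expect b l (\<lambda>x. pd 2 (pd 1 (ecr_logpdf x)) b l) = ecr_kappa2 b 1 / l"
    by (simp only: mixed)
  have "ecr_expect b l (\<lambda>x. pd 2 (pd 2 (ecr_logpdf x)) b l)
      = (\<Sum>i\<in>{0, 2, 3, 4}. [- 1, 0, - (b + 2), b - 1, 2 * b + 4] ! i / l\<^sup>2 * fact i / pochhammer (b + 1) i)"
    by (rule expect) (use assms(2) in \<open>simp_all add: hess field_simps del: One_nat_def\<close>)
  also have "\<dots> = ecr_kappa2 b 2 / l\<^sup>2"
    using assms(1,2) by (simp add: ecr_kappa2_def eval_nat_numeral pochhammer_Suc divide_simps) (simp add: algebra_simps)
  finally have E22: "ecr_expect b l (\<lambda>x. pd 2 (pd 2 (ecr_logpdf x)) b l) = ecr_kappa2 b 2 / l\<^sup>2" .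
  from assms(3,4) consider "r = 1" "s = 1" | "r = 1" "s = 2" | "r = 2" "s = 1" | "r = 2" "s = 2"
    by blast
  then show ?thesis
    by cases (simp only: kappa2_def E11 E12 E21 E22; simp)+
qed

lemma kappa3_eq_ecr_kappa3:
  assumes "b > 0" "l > 0" "r \<in> {1, 2}" "s \<in> {1, 2}" "t \<in> {1, 2}"
  shows "kappa3 n r s t b l = real n * ecr_kappa3 b (r + s + t - 3) / l ^ (r + s + t - 3)"
proof -
  note third = pd_pd_pd_ecr_logpdf[OF _ assms(1,2)]
  note expect = ecr_expect_W_polynomial[OF assms(1,2)]
  have "ecr_expect b l (\<lambda>x. pd 1 (pd 1 (pd 1 (ecr_logpdf x))) b l)
      = (\<Sum>i\<in>{0}. 2 / b ^ 3 * fact i / pochhammer (b + 1) i)"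
    by (rule expect) (simp_all add: third del: One_nat_def)
  then have E111: "ecr_expect b l (\<lambda>x. pd 1 (pd 1 (pd 1 (ecr_logpdf x))) b l) = ecr_kappa3 b 0"
    by (simp add: ecr_kappa3_def)
  have zero: "ecr_expect b l h = ecr_kappa3 b 1 / l" if "\<And>x. x > 0 \<Longrightarrow> h x = 0" for h
    using expect[of "{}" h] that by (simp add: ecr_kappa3_def)
  have two: "ecr_expect b l h = ecr_kappa3 b 2 / l\<^sup>2"
    if "\<And>x. x > 0 \<Longrightarrow> h x = (ecr_W l x ^ 3 + 2 * ecr_W l x ^ 4 - ecr_W l x ^ 2) / l\<^sup>2" for h
  proof -
    have "ecr_expect b l h = (\<Sum>i\<in>{2, 3, 4}. [0, 0, - 1, 1, 2] ! i / l\<^sup>2 * fact i / pochhammer (b + 1) i)"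
      by (rule expect) (use assms(2) in \<open>simp_all add: that field_simps\<close>)
    also have "\<dots> = ecr_kappa3 b 2 / l\<^sup>2"
      using assms(1,2)
      by (simp add: ecr_kappa3_def eval_nat_numeral pochhammer_Suc divide_simps) (simp add: algebra_simps)
    finally show ?thesis .
  qed
  have "ecr_expect b l (\<lambda>x. pd 2 (pd 2 (pd 2 (ecr_logpdf x))) b l)
      = (\<Sum>i\<in>{0, 3, 4, 5, 6}. [2, 0, 0, b - 1, 6 * b + 12, 3 - 3 * b, - (8 * b + 16)] ! i / l ^ 3
          * fact i / pochhammer (b + 1) i)"
    by (rule expect) (use assms(2) in \<open>simp_all add: third field_simps del: One_nat_def\<close>)
  also have "\<dots> = ecr_kappa3 b 3 / l ^ 3"
    using assms(1,2)
    by (simp add: ecr_kappa3_def eval_nat_numeral pochhammer_Suc divide_simps) (simp add: algebra_simps)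
  finally have E222: "ecr_expect b l (\<lambda>x. pd 2 (pd 2 (pd 2 (ecr_logpdf x))) b l) = ecr_kappa3 b 3 / l ^ 3" .
  have E112: "ecr_expect b l (\<lambda>x. pd 1 (pd 1 (pd 2 (ecr_logpdf x))) b l) = ecr_kappa3 b 1 / l"
    and E121: "ecr_expect b l (\<lambda>x. pd 1 (pd 2 (pd 1 (ecr_logpdf x))) b l) = ecr_kappa3 b 1 / l"
    and E211: "ecr_expect b l (\<lambda>x. pd 2 (pd 1 (pd 1 (ecr_logpdf x))) b l) = ecr_kappa3 b 1 / l"
    by (rule zero, simp add: third del: One_nat_def)+
  have E122: "ecr_expect b l (\<lambda>x. pd 1 (pd 2 (pd 2 (ecr_logpdf x))) b l) = ecr_kappa3 b 2 / l\<^sup>2"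
    and E212: "ecr_expect b l (\<lambda>x. pd 2 (pd 1 (pd 2 (ecr_logpdf x))) b l) = ecr_kappa3 b 2 / l\<^sup>2"
    and E221: "ecr_expect b l (\<lambda>x. pd 2 (pd 2 (pd 1 (ecr_logpdf x))) b l) = ecr_kappa3 b 2 / l\<^sup>2"
    by (rule two, simp add: third del: One_nat_def)+
  from assms(3-5) consider
      "r = 1" "s = 1" "t = 1" | "r = 1" "s = 1" "t = 2" | "r = 1" "s = 2" "t = 1" | "r = 2" "s = 1" "t = 1"
    | "r = 1" "s = 2" "t = 2" | "r = 2" "s = 1" "t = 2" | "r = 2" "s = 2" "t = 1" | "r = 2" "s = 2" "t = 2"
    by blast
  then show ?thesis
    by cases (simp only: kappa3_def E111 E112 E121 E211 E122 E212 E221 E222; simp add: eval_nat_numeral)+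
qed

definition ecr_kappa2_deriv :: "real \<Rightarrow> nat \<Rightarrow> real" where
  "ecr_kappa2_deriv b m =
     (if m = 0 then 2 / b ^ 3
      else if m = 1 then (b\<^sup>2 + 8 * b + 10) / ((b + 1)\<^sup>2 * (b + 2)\<^sup>2)
      else (2 * b ^ 4 + 20 * b ^ 3 - 34 * b\<^sup>2 - 528 * b - 864) / ((b + 2)\<^sup>2 * (b + 3)\<^sup>2 * (b + 4)\<^sup>2))"

lemma has_real_derivative_ecr_kappa2:
  assumes "b > 0"
  shows "((\<lambda>b. ecr_kappa2 b m) has_real_derivative ecr_kappa2_deriv b m) (at b)"
proof -
  consider "m = 0" | "m = 1" | "m \<noteq> 0" "m \<noteq> 1"
    by blast
  then show ?thesis
  proof cases
    case 1
    then show ?thesis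
      unfolding ecr_kappa2_def ecr_kappa2_deriv_def using assms
      by (auto intro!: derivative_eq_intros simp: field_simps power2_eq_square power3_eq_cube)
  next
    case 2
    have "((\<lambda>b. - (b + 4) / ((b + 1) * (b + 2))) has_real_derivative
        (- 1 * ((b + 1) * (b + 2)) - (- (b + 4)) * ((b + 1) + (b + 2))) / (((b + 1) * (b + 2)) * ((b + 1) * (b + 2)))) (at b)"
      using assms by (auto intro!: derivative_eq_intros DERIV_divide)
    then show ?thesis
      unfolding ecr_kappa2_def ecr_kappa2_deriv_def using 2 assms
      by (simp add: power2_eq_square algebra_simps)
  next
    case 3
    show ?thesis
      unfolding ecr_kappa2_def ecr_kappa2_deriv_def using 3 assms
      by (auto intro!: derivative_eq_intros simp: divide_simps) (simp_all add: algebra_simps eval_nat_numeral)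
  qed
qed

lemma kappa2_d_eq:
  assumes "b > 0" "l > 0" "r \<in> {1, 2}" "s \<in> {1, 2}"
  shows "kappa2_d n r s 1 b l = real n * ecr_kappa2_deriv b (r + s - 2) / l ^ (r + s - 2)"
    and "kappa2_d n r s 2 b l = - real n * real (r + s - 2) * ecr_kappa2 b (r + s - 2) / l ^ (r + s - 1)"
proof -
  define m where "m = r + s - 2"
  have kappa2: "kappa2 n r s b' l' = real n * ecr_kappa2 b' m / l' ^ m" if "b' > 0" "l' > 0" for b' l'
    using kappa2_eq_ecr_kappa2[OF that assms(3,4)] by (simp add: m_def)
  show "kappa2_d n r s 1 b l = real n * ecr_kappa2_deriv b (r + s - 2) / l ^ (r + s - 2)"
    unfolding kappa2_d_def m_def[symmetric]
  proof (rule pd_1_eqI[OF assms(1)])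
    show "\<And>b'. b' > 0 \<Longrightarrow> kappa2 n r s b' l = real n * ecr_kappa2 b' m / l ^ m"
      using kappa2 assms(2) by blast
    show "((\<lambda>b. real n * ecr_kappa2 b m / l ^ m) has_real_derivative real n * ecr_kappa2_deriv b m / l ^ m) (at b)"
      by (intro DERIV_cdivide DERIV_cmult has_real_derivative_ecr_kappa2 assms(1))
  qed
  have "r + s - 1 = Suc m"
    using assms(3,4) by (auto simp: m_def)
  show "kappa2_d n r s 2 b l = - real n * real (r + s - 2) * ecr_kappa2 b (r + s - 2) / l ^ (r + s - 1)"
    unfolding kappa2_d_def m_def[symmetric]
  proof (rule pd_2_eqI[OF assms(2)])
    show "\<And>l'. l' > 0 \<Longrightarrow> kappa2 n r s b l' = real n * ecr_kappa2 b m / l' ^ m"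
      using kappa2 assms(1) by blast
    show "((\<lambda>l. real n * ecr_kappa2 b m / l ^ m) has_real_derivative
        - real n * real m * ecr_kappa2 b m / l ^ (r + s - 1)) (at l)"
      using assms(2) \<open>r + s - 1 = Suc m\<close>
      by (intro DERIV_cong[OF has_real_derivative_divide_power[OF DERIV_const]]) simp_all
  qed
qed

text \<open>\<open>\<kappa>\<^sub>r\<^sub>s\<^sup>(\<^sup>t\<^sup>) - \<kappa>\<^sub>r\<^sub>s\<^sub>t / 2\<close> of one observation at \<open>\<lambda> = 1\<close>; for \<open>t = 2\<close> the
  derivative comes from the factor \<open>\<lambda>\<^sup>-\<^sup>m\<close> alone.\<close>

definition ecr_tau :: "real \<Rightarrow> nat \<Rightarrow> nat \<Rightarrow> nat \<Rightarrow> real" where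
  "ecr_tau b r s t =
     (if t = 1 then ecr_kappa2_deriv b (r + s - 2) else - real (r + s - 2) * ecr_kappa2 b (r + s - 2))
     - ecr_kappa3 b (r + s + t - 3) / 2"

lemma kappa2_d_minus_half_kappa3:
  assumes "b > 0" "l > 0" "r \<in> {1, 2}" "s \<in> {1, 2}" "t \<in> {1, 2}"
  shows "kappa2_d n r s t b l - kappa3 n r s t b l / 2 = real n * ecr_tau b r s t / l ^ (r + s + t - 3)"
proof -
  have "r + s \<ge> 2"
    using assms(3,4) by auto
  with assms(5) consider "t = 1" "r + s + t - 3 = r + s - 2" | "t = 2" "r + s + t - 3 = r + s - 1"
    by fastforce
  then show ?thesis
    unfolding kappa3_eq_ecr_kappa3[OF assms] ecr_tau_def
    by cases (simp only: kappa2_d_eq[OF assms(1-4)]; simp add: diff_divide_distrib right_diff_distrib)+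
qed

section \<open>The Cox-Snell bias\<close>

text \<open>Inverse of the symmetric matrix \<open>[[K 0, K 1], [K 1, K 2]]\<close>.\<close>

definition sym2_inv :: "(nat \<Rightarrow> real) \<Rightarrow> nat \<Rightarrow> nat \<Rightarrow> real" where
  "sym2_inv K r s =
     (if r = 1 \<and> s = 1 then K 2 else if r = 2 \<and> s = 2 then K 0 else - K 1) / (K 0 * K 2 - (K 1)\<^sup>2)"

lemma kappa_inv_scaling:
  assumes "n > 0" "l > 0" "r \<in> {1, 2}" "s \<in> {1, 2}"
    and K: "\<And>r s. r \<in> {1, 2} \<Longrightarrow> s \<in> {1, 2} \<Longrightarrow> kappa2 n r s b l = real n * K (r + s - 2) / l ^ (r + s - 2)"
  shows "kappa_inv n r s b l = l ^ (r + s - 2) / real n * sym2_inv K r s"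
proof -
  have K11: "kappa2 n 1 1 b l = real n * K 0" and K12: "kappa2 n 1 2 b l = real n * K 1 / l"
    and K21: "kappa2 n 2 1 b l = real n * K 1 / l" and K22: "kappa2 n 2 2 b l = real n * K 2 / l\<^sup>2"
    using K[of 1 1] K[of 1 2] K[of 2 1] K[of 2 2] by simp_all
  have det: "kappa2 n 1 1 b l * kappa2 n 2 2 b l - kappa2 n 1 2 b l * kappa2 n 2 1 b l
      = (real n)\<^sup>2 / l\<^sup>2 * (K 0 * K 2 - (K 1)\<^sup>2)"
    unfolding K11 K12 K21 K22 using assms(2) by (simp add: field_simps power2_eq_square)
  from assms(3,4) show ?thesis
    using assms(1,2)
    by (cases "K 0 * K 2 - (K 1)\<^sup>2 = 0")
      (auto simp: kappa_inv_def Let_def det sym2_inv_def K11 K12 K21 K22 field_simps power2_eq_square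
        simp del: One_nat_def)
qed

lemma cox_snell_bias_scaling:
  assumes "n > 0" "l > 0" "i \<in> {1, 2}"
    and K: "\<And>r s. r \<in> {1, 2} \<Longrightarrow> s \<in> {1, 2} \<Longrightarrow> kappa2 n r s b l = real n * K (r + s - 2) / l ^ (r + s - 2)"
    and T: "\<And>r s t. r \<in> {1, 2} \<Longrightarrow> s \<in> {1, 2} \<Longrightarrow> t \<in> {1, 2} \<Longrightarrow>
      kappa2_d n r s t b l - kappa3 n r s t b l / 2 = real n * T r s t / l ^ (r + s + t - 3)"
  shows "cox_snell_bias n i b l = l ^ (i - 1) / real n *
    (\<Sum>r\<in>{1, 2}. \<Sum>s\<in>{1, 2}. \<Sum>t\<in>{1, 2}. sym2_inv K i r * sym2_inv K s t * T r s t)"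
  unfolding cox_snell_bias_def sum_distrib_left
proof (intro sum.cong refl)
  fix r s t :: nat
  assume rst: "r \<in> {1, 2}" "s \<in> {1, 2}" "t \<in> {1, 2}"
  have "i + r - 2 + (s + t - 2) = i - 1 + (r + s + t - 3)"
    using assms(3) rst by auto
  then have "l ^ (i + r - 2) * l ^ (s + t - 2) = l ^ (i - 1) * l ^ (r + s + t - 3)"
    by (metis power_add)
  with assms(1,2) show "kappa_inv n i r b l * kappa_inv n s t b l * (kappa2_d n r s t b l - kappa3 n r s t b l / 2)
      = l ^ (i - 1) / real n * (sym2_inv K i r * sym2_inv K s t * T r s t)"
    by (simp only: kappa_inv_scaling[OF assms(1,2) assms(3) rst(1) K]
        kappa_inv_scaling[OF assms(1,2) rst(2,3) K] T[OF rst]) (simp add: field_simps)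
qed

lemma Cpoly_pos:
  assumes "b > 0"
  shows "Cpoly b > 0"
proof -
  have "Cpoly b = (b - 4)\<^sup>2 * (b + 1) + 2 * b + 56"
    by (simp add: Cpoly_def algebra_simps power2_eq_square power3_eq_cube)
  moreover have "(b - 4)\<^sup>2 * (b + 1) \<ge> 0"
    using assms by simp
  ultimately show ?thesis
    using assms by linarith
qed

lemma sym2_inv_ecr_kappa2:
  assumes "b > 0"
  shows "sym2_inv (ecr_kappa2 b) 1 1 = - b\<^sup>2 * (b + 1)\<^sup>2 * (b + 2) * (b\<^sup>2 + 11 * b + 36) / Cpoly b"
    and "sym2_inv (ecr_kappa2 b) 1 2 = b * (b + 1) * (b + 2) * (b + 3) * (b + 4)\<^sup>2 / Cpoly b"
    and "sym2_inv (ecr_kappa2 b) 2 1 = b * (b + 1) * (b + 2) * (b + 3) * (b + 4)\<^sup>2 / Cpoly b"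
    and "sym2_inv (ecr_kappa2 b) 2 2 = - (b + 1)\<^sup>2 * (b + 2)\<^sup>2 * (b + 3) * (b + 4) / (b * Cpoly b)"
proof -
  define P where "P = b * (b + 1)\<^sup>2 * (b + 2)\<^sup>2 * (b + 3) * (b + 4)"
  have "ecr_kappa2 b 0 * ecr_kappa2 b 2 - (ecr_kappa2 b 1)\<^sup>2 = Cpoly b / P"
    using assms unfolding P_def
    by (simp add: ecr_kappa2_def Cpoly_def divide_simps) (simp add: algebra_simps eval_nat_numeral)
  then have inv: "sym2_inv (ecr_kappa2 b) r s
      = (if r = 1 \<and> s = 1 then ecr_kappa2 b 2 else if r = 2 \<and> s = 2 then ecr_kappa2 b 0 else - ecr_kappa2 b 1)
        * P / Cpoly b" for r s
    by (simp add: sym2_inv_def)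
  from assms Cpoly_pos[OF assms] show
    "sym2_inv (ecr_kappa2 b) 1 1 = - b\<^sup>2 * (b + 1)\<^sup>2 * (b + 2) * (b\<^sup>2 + 11 * b + 36) / Cpoly b"
    "sym2_inv (ecr_kappa2 b) 1 2 = b * (b + 1) * (b + 2) * (b + 3) * (b + 4)\<^sup>2 / Cpoly b"
    "sym2_inv (ecr_kappa2 b) 2 1 = b * (b + 1) * (b + 2) * (b + 3) * (b + 4)\<^sup>2 / Cpoly b"
    "sym2_inv (ecr_kappa2 b) 2 2 = - (b + 1)\<^sup>2 * (b + 2)\<^sup>2 * (b + 3) * (b + 4) / (b * Cpoly b)"
    by (simp_all add: inv P_def ecr_kappa2_def divide_simps) (simp_all add: algebra_simps eval_nat_numeral)
qed

lemma ecr_tau_contraction: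
  assumes "b > 0"
  shows "(\<Sum>s\<in>{1, 2}. \<Sum>t\<in>{1, 2}. sym2_inv (ecr_kappa2 b) s t * ecr_tau b 1 s t)
      = - (b ^ 7 + 17 * b ^ 6 + 123 * b ^ 5 + 464 * b ^ 4 + 1055 * b ^ 3 + 1488 * b\<^sup>2 + 1084 * b + 240)
          / (b * (b + 1) * (b + 2) * Cpoly b)"
    and "(\<Sum>s\<in>{1, 2}. \<Sum>t\<in>{1, 2}. sym2_inv (ecr_kappa2 b) s t * ecr_tau b 2 s t)
      = - (b ^ 8 + 29 * b ^ 7 + 361 * b ^ 6 + 2496 * b ^ 5 + 10227 * b ^ 4 + 25807 * b ^ 3 + 37303 * b\<^sup>2
            + 22524 * b + 1764) / ((b + 3) * (b + 5) * (b + 6) * Cpoly b)"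
  using assms Cpoly_pos[OF assms]
  by (simp_all add: sym2_inv_ecr_kappa2 ecr_tau_def ecr_kappa2_def ecr_kappa2_deriv_def ecr_kappa3_def
      divide_simps del: One_nat_def)
    (simp_all add: algebra_simps eval_nat_numeral)

lemma ecr_bias_sum:
  assumes "b > 0"
  shows "(\<Sum>r\<in>{1, 2}. \<Sum>s\<in>{1, 2}. \<Sum>t\<in>{1, 2}.
        sym2_inv (ecr_kappa2 b) 1 r * sym2_inv (ecr_kappa2 b) s t * ecr_tau b r s t)
      = b^3 + 13*b^2 + 122*b + 380
          - 699840 / (19321 * (b + 5)) + 96000 / (361 * (b + 6))
          + 432 * (4085783*b^2 - 8192586*b - 40352456) / (2641 * (Cpoly b)^2)
          - 12 * (70740551*b^2 + 3809213278*b - 35831044156) / (6974881 * Cpoly b)"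
    and "(\<Sum>r\<in>{1, 2}. \<Sum>s\<in>{1, 2}. \<Sum>t\<in>{1, 2}.
        sym2_inv (ecr_kappa2 b) 2 r * sym2_inv (ecr_kappa2 b) s t * ecr_tau b r s t)
      = 8*b + 86 + 49 / (270 * b)
          - 1679616 / (96605 * (b + 5)) + 80000 / (1083 * (b + 6))
          - 8 * (84037561*b^2 + 21509105*b - 393761162) / (7923 * (Cpoly b)^2)
          + (356431397749*b^2 - 158970444943*b - 4636191041858) / (376643574 * Cpoly b)"
proof -
  have regroup: "(\<Sum>r\<in>{1, 2}. \<Sum>s\<in>{1, 2}. \<Sum>t\<in>{1, 2}.
        sym2_inv (ecr_kappa2 b) i r * sym2_inv (ecr_kappa2 b) s t * ecr_tau b r s t)
      = sym2_inv (ecr_kappa2 b) i 1 * (\<Sum>s\<in>{1, 2}. \<Sum>t\<in>{1, 2}. sym2_inv (ecr_kappa2 b) s t * ecr_tau b 1 s t)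
        + sym2_inv (ecr_kappa2 b) i 2 * (\<Sum>s\<in>{1, 2}. \<Sum>t\<in>{1, 2}. sym2_inv (ecr_kappa2 b) s t * ecr_tau b 2 s t)"
    for i :: nat
    by (simp add: sum_distrib_left mult.assoc distrib_left del: One_nat_def)
  have "Cpoly b \<noteq> 0"
    using Cpoly_pos[OF assms] by simp
  then have C: "b ^ 3 - 7 * b\<^sup>2 + 10 * b + 72 \<noteq> 0"
    by (simp add: Cpoly_def)
  show "(\<Sum>r\<in>{1, 2}. \<Sum>s\<in>{1, 2}. \<Sum>t\<in>{1, 2}.
        sym2_inv (ecr_kappa2 b) 1 r * sym2_inv (ecr_kappa2 b) s t * ecr_tau b r s t)
      = b^3 + 13*b^2 + 122*b + 380
          - 699840 / (19321 * (b + 5)) + 96000 / (361 * (b + 6))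
          + 432 * (4085783*b^2 - 8192586*b - 40352456) / (2641 * (Cpoly b)^2)
          - 12 * (70740551*b^2 + 3809213278*b - 35831044156) / (6974881 * Cpoly b)"
    unfolding regroup ecr_tau_contraction[OF assms] sym2_inv_ecr_kappa2[OF assms]
    using assms C by (simp add: Cpoly_def divide_simps) (simp add: algebra_simps eval_nat_numeral)
  show "(\<Sum>r\<in>{1, 2}. \<Sum>s\<in>{1, 2}. \<Sum>t\<in>{1, 2}.
        sym2_inv (ecr_kappa2 b) 2 r * sym2_inv (ecr_kappa2 b) s t * ecr_tau b r s t)
      = 8*b + 86 + 49 / (270 * b)
          - 1679616 / (96605 * (b + 5)) + 80000 / (1083 * (b + 6))
          - 8 * (84037561*b^2 + 21509105*b - 393761162) / (7923 * (Cpoly b)^2)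
          + (356431397749*b^2 - 158970444943*b - 4636191041858) / (376643574 * Cpoly b)"
    unfolding regroup ecr_tau_contraction[OF assms] sym2_inv_ecr_kappa2[OF assms]
    using assms C by (simp add: Cpoly_def divide_simps) (simp add: algebra_simps eval_nat_numeral)
qed

theorem proposition11:
  fixes n :: nat and b l :: real
  assumes "n > 0" and "b > 0" and "l > 0"
  shows "cox_snell_bias n 1 b l =
           (1 / real n) * (b^3 + 13*b^2 + 122*b + 380
             - 699840 / (19321 * (b + 5)) + 96000 / (361 * (b + 6))
             + 432 * (4085783*b^2 - 8192586*b - 40352456) / (2641 * (Cpoly b)^2)
             - 12 * (70740551*b^2 + 3809213278*b - 35831044156) / (6974881 * Cpoly b)) \<and>
         cox_snell_bias n 2 b l =
           (l / real n) * (8*b + 86 + 49 / (270 * b)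
             - 1679616 / (96605 * (b + 5)) + 80000 / (1083 * (b + 6))
             - 8 * (84037561*b^2 + 21509105*b - 393761162) / (7923 * (Cpoly b)^2)
             + (356431397749*b^2 - 158970444943*b - 4636191041858) / (376643574 * Cpoly b))"
proof -
  have bias: "cox_snell_bias n i b l = l ^ (i - 1) / real n *
      (\<Sum>r\<in>{1, 2}. \<Sum>s\<in>{1, 2}. \<Sum>t\<in>{1, 2}.
        sym2_inv (ecr_kappa2 b) i r * sym2_inv (ecr_kappa2 b) s t * ecr_tau b r s t)"
    if "i \<in> {1, 2}" for i
    using assms that kappa2_eq_ecr_kappa2 kappa2_d_minus_half_kappa3 by (intro cox_snell_bias_scaling) auto
  show ?thesis
    using bias[of 1] bias[of 2] ecr_bias_sum[OF assms(2)] by simp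
qed

end
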